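(* Let $\alpha$ and $\theta_\alpha$ be as in the context. For $n\in\mathbb N$ put $\kappa(n):=-n\log2/\log a_n$, and $\kappa_+:=\inf\{\kappa(n):n\in\mathbb N\}$, $\kappa_-:=\sup\{\kappa(n):n\in\mathbb N\}$. Then $\theta_\alpha$ is $\kappa_+$-Hölder continuous and $\kappa_-$-sub-Hölder continuous.
   Context: Let $\mathcal U=[0,1]$. $\alpha=\{A_n:n\in\mathbb N\}$ is a countable partition of $\mathcal U$ (up to the point $0$) into left-open, right-closed intervals of positive length, ordered from right to left starting with $A_1$, accumulating only at $0$; $a_n$ is the length of $A_n$, $t_n:=\sum_{k\ge n}a_k$, $A_n=(t_{n+1},t_n]$. $L_\alpha(x)=(t_n-x)/a_n$ on $A_n$, $L_\alpha(0)=0$. For $x\ne0$, the $\alpha$-Lüroth digits $\ell_k$ are defined by $L_\alpha^{k-1}(x)\in A_{\ell_k}$ (terminating at step $k$ iff $L_\alpha^{k-1}(x)=t_n$ for some $n\ge2$), written $x=[\ell_1,\ell_2,\dots]_\alpha$. The map $\theta_\alpha:\mathcal U\to\mathcal U$ is $\theta_\alpha(0)=0$ and $\theta_\alpha([\ell_1,\ell_2,\dots]_\alpha):=-2\sum_{k\ge1}(-1)^k2^{-\sum_{i=1}^k\ell_i}$. A map $S:\mathcal U\to\mathcal U$ is $\kappa$-Hölder continuous if $|S(x)-S(y)|\le c|x-y|^\kappa$ for some $c>0$ and all $x,y$; for $\kappa\in(0,\infty)$ it is $\kappa$-sub-Hölder continuous if there is $c>0$ with $|S(x)-S(y)|\ge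 c|x-y|^\kappa$ for all $x,y\in\mathcal U$. *)

theory Defs
  imports "HOL-Analysis.Analysis"
begin

text \<open>The partition alpha is given by the lengths a n (n >= 1); the value a 0 is irrelevant.\<close>

definition lueroth_partition :: "(nat \<Rightarrow> real) \<Rightarrow> bool" where
  "lueroth_partition a \<longleftrightarrow> (\<forall>n\<ge>1. a n > 0) \<and> summable a \<and> (\<Sum>n. a (n + 1)) = 1"

definition tail :: "(nat \<Rightarrow> real) \<Rightarrow> nat \<Rightarrow> real" where
  "tail a n = (\<Sum>k. a (k + n))"

definition lue_digit :: "(nat \<Rightarrow> real) \<Rightarrow> real \<Rightarrow> nat" where
  "lue_digit a x = (THE n. 1 \<le> n \<and> tail a (Suc n) < x \<and> x \<le> tail a n)"

definition lue_map :: "(nat \<Rightarrow> real) \<Rightarrow> real \<Rightarrow> real" where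
  "lue_map a x = (if x = 0 then 0
     else (tail a (lue_digit a x) - x) / a (lue_digit a x))"

text \<open>theta_alpha: the (k+1)-st digit is lue_digit a ((lue_map a ^^ k) x), present as long as
  (lue_map a ^^ k) x \<noteq> 0; the expansion terminates once the orbit hits 0.\<close>
definition theta :: "(nat \<Rightarrow> real) \<Rightarrow> real \<Rightarrow> real" where
  "theta a x = -2 * (\<Sum>k. if (lue_map a ^^ k) x = 0 then 0
      else (-1) ^ (k + 1) * (1/2) ^ (\<Sum>i\<le>k. lue_digit a ((lue_map a ^^ i) x)))"

definition holder_cont :: "(real \<Rightarrow> real) \<Rightarrow> real \<Rightarrow> bool" where
  "holder_cont S \<kappa> \<longleftrightarrow> (\<exists>c>0. \<forall>x\<in>{0..1}. \<forall>y\<in>{0..1}. \<bar>S x - S y\<bar> \<le> c * \<bar>x - y\<bar> powr \<kappa>)"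

definition sub_holder_cont :: "(real \<Rightarrow> real) \<Rightarrow> real \<Rightarrow> bool" where
  "sub_holder_cont S \<kappa> \<longleftrightarrow> (\<exists>c>0. \<forall>x\<in>{0..1}. \<forall>y\<in>{0..1}. \<bar>S x - S y\<bar> \<ge> c * \<bar>x - y\<bar> powr \<kappa>)"

definition kappa :: "(nat \<Rightarrow> real) \<Rightarrow> nat \<Rightarrow> real" where
  "kappa a n = - real n * ln 2 / ln (a n)"

end

theory Submission
  imports Defs
begin

text \<open>
  If \<open>x\<close> has first digit \<open>n\<close>, then \<open>x = t n - a n * L x\<close> and \<open>theta x = 2^-n * (2 - theta (L x))\<close>:
  on the cylinder \<open>A n\<close>, \<open>theta\<close> scales differences by \<open>2^-n\<close> while lengths scale by \<open>a n\<close>,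
  and \<open>2^-n \<le> (a n)^\<kappa>\<close> (resp. \<open>\<ge>\<close>) is exactly \<open>\<kappa> \<le> kappa n\<close> (resp. \<open>\<ge>\<close>). Two points with the
  same first digit are therefore compared through their images under \<open>L\<close>; points with different
  first digits are separated by a whole cylinder and are estimated directly. As the recursion
  through common digits need not terminate, the estimate is proved up to an error \<open>2^-k\<close>,
  which halves with each common digit.
\<close>

lemma le_by_contraction:
  fixes F G :: "'a \<Rightarrow> real"
  assumes bounded: "\<And>p. P p \<Longrightarrow> F p \<le> G p + B" and "0 \<le> B"
    and step: "\<And>p. P p \<Longrightarrow>
      F p \<le> G p \<or> (\<exists>q h. P q \<and> 0 \<le> h \<and> h \<le> 1/2 \<and> F p \<le> h * F q \<and> h * G q \<le> G p)"
    and "P p"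
  shows "F p \<le> G p"
proof -
  have approx: "F p \<le> G p + B * (1/2) ^ k" if "P p" for p k
    using that
  proof (induction k arbitrary: p)
    case 0
    then show ?case using bounded by simp
  next
    case (Suc k)
    have B2: "0 \<le> B * (1/2) ^ Suc k" using \<open>0 \<le> B\<close> by simp
    from step[OF Suc.prems] show ?case
    proof
      assume "F p \<le> G p"
      with B2 show ?thesis by linarith
    next
      assume "\<exists>q h. P q \<and> 0 \<le> h \<and> h \<le> 1/2 \<and> F p \<le> h * F q \<and> h * G q \<le> G p"
      then obtain q h where q: "P q" and h: "0 \<le> h" "h \<le> 1/2"
        and F: "F p \<le> h * F q" and G: "h * G q \<le> G p" by blast
      have "F p \<le> h * (G q + B * (1/2) ^ k)"
        using F mult_left_mono[OF Suc.IH[OF q] h(1)] by linarith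
      also have "\<dots> \<le> G p + (1/2) * (B * (1/2) ^ k)"
        using G mult_right_mono[OF h(2), of "B * (1/2) ^ k"] \<open>0 \<le> B\<close>
        by (simp add: distrib_left)
      finally show ?thesis by simp
    qed
  qed
  have "(\<lambda>k. G p + B * (1/2) ^ k) \<longlonglongrightarrow> G p"
    by (auto intro!: tendsto_eq_intros LIMSEQ_power_zero)
  then show ?thesis
    using approx[OF \<open>P p\<close>] by (intro LIMSEQ_le_const) auto
qed

lemma powr_half_le_powr_add:
  fixes x b y :: real
  assumes "0 \<le> \<kappa>" "x \<le> b" "b \<le> y"
  shows "((y - x) / 2) powr \<kappa> \<le> (y - b) powr \<kappa> + (b - x) powr \<kappa>"
proof (cases "(y - x) / 2 \<le> y - b")
  case True
  then have "((y - x) / 2) powr \<kappa> \<le> (y - b) powr \<kappa>" using assms by (intro powr_mono2) auto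
  then show ?thesis using powr_ge_zero[of "b - x" \<kappa>] by linarith
next
  case False
  then have "((y - x) / 2) powr \<kappa> \<le> (b - x) powr \<kappa>" using assms by (intro powr_mono2) auto
  then show ?thesis using powr_ge_zero[of "y - b" \<kappa>] by linarith
qed

lemma half_power_le_half: "1 \<le> n \<Longrightarrow> (1/2::real) ^ n \<le> 1/2"
  using power_decreasing[of 1 n "1/2::real"] by simp

lemma holder_contI:
  assumes "\<And>x y. 0 \<le> x \<Longrightarrow> x < y \<Longrightarrow> y \<le> 1 \<Longrightarrow> \<bar>S y - S x\<bar> \<le> c * (y - x) powr \<kappa>"
    and "0 < c"
  shows "holder_cont S \<kappa>"
  unfolding holder_cont_def
proof (intro exI[of _ c] conjI ballI)
  fix x y :: real assume "x \<in> {0..1}" "y \<in> {0..1}"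
  then consider "x < y" | "x = y" | "y < x" by fastforce
  then show "\<bar>S x - S y\<bar> \<le> c * \<bar>x - y\<bar> powr \<kappa>"
    using assms(1)[of x y] assms(1)[of y x] \<open>x \<in> {0..1}\<close> \<open>y \<in> {0..1}\<close>
    by cases (auto simp: abs_minus_commute)
qed (use \<open>0 < c\<close> in simp)

lemma sub_holder_contI:
  assumes "\<And>x y. 0 \<le> x \<Longrightarrow> x < y \<Longrightarrow> y \<le> 1 \<Longrightarrow> c * (y - x) powr \<kappa> \<le> \<bar>S y - S x\<bar>"
    and "0 < c"
  shows "sub_holder_cont S \<kappa>"
  unfolding sub_holder_cont_def
proof (intro exI[of _ c] conjI ballI)
  fix x y :: real assume "x \<in> {0..1}" "y \<in> {0..1}"
  then consider "x < y" | "x = y" | "y < x" by fastforce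
  then show "c * \<bar>x - y\<bar> powr \<kappa> \<le> \<bar>S x - S y\<bar>"
    using assms(1)[of x y] assms(1)[of y x] \<open>x \<in> {0..1}\<close> \<open>y \<in> {0..1}\<close>
    by cases (auto simp: abs_minus_commute)
qed (use \<open>0 < c\<close> in simp)

lemma half_power_eq_exp: "(1/2::real) ^ n = exp (- real n * ln 2)"
  by (simp add: exp_minus exp_of_nat_mult power_one_over inverse_eq_divide)

lemma half_power_le_powr_iff:
  assumes "0 < b" "b < 1"
  shows "(1/2) ^ n \<le> b powr \<kappa> \<longleftrightarrow> \<kappa> \<le> - real n * ln 2 / ln b"
proof -
  have "(1/2) ^ n \<le> b powr \<kappa> \<longleftrightarrow> - real n * ln 2 \<le> \<kappa> * ln b"
    using assms by (simp add: half_power_eq_exp powr_def del: mult_minus_left)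
  also have "\<dots> \<longleftrightarrow> \<kappa> \<le> - real n * ln 2 / ln b"
    using assms by (metis neg_le_divide_eq ln_less_zero)
  finally show ?thesis .
qed

lemma powr_le_half_power_iff:
  assumes "0 < b" "b < 1"
  shows "b powr \<kappa> \<le> (1/2) ^ n \<longleftrightarrow> - real n * ln 2 / ln b \<le> \<kappa>"
proof -
  have "b powr \<kappa> \<le> (1/2) ^ n \<longleftrightarrow> \<kappa> * ln b \<le> - real n * ln 2"
    using assms by (simp add: half_power_eq_exp powr_def del: mult_minus_left)
  also have "\<dots> \<longleftrightarrow> - real n * ln 2 / ln b \<le> \<kappa>"
    using assms by (metis neg_divide_le_eq ln_less_zero)
  finally show ?thesis .
qed

definition theta_term :: "(nat \<Rightarrow> real) \<Rightarrow> real \<Rightarrow> nat \<Rightarrow> real" where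
  "theta_term a x k = (if (lue_map a ^^ k) x = 0 then 0
      else (-1) ^ (k + 1) * (1/2) ^ (\<Sum>i\<le>k. lue_digit a ((lue_map a ^^ i) x)))"

lemma theta_eq_suminf: "theta a x = -2 * (\<Sum>k. theta_term a x k)"
  unfolding theta_def theta_term_def ..

locale lueroth =
  fixes a :: "nat \<Rightarrow> real"
  assumes partition: "lueroth_partition a"
begin

lemma a_pos: "1 \<le> n \<Longrightarrow> 0 < a n"
  using partition unfolding lueroth_partition_def by auto

lemma summable_shifted: "summable (\<lambda>k. a (k + n))"
  using partition summable_ignore_initial_segment unfolding lueroth_partition_def by blast

lemma tail_Suc: "tail a n = a n + tail a (Suc n)"
  using suminf_split_head[OF summable_shifted[of n]] unfolding tail_def by (simp add: add.commute)

lemma tail_1: "tail a 1 = 1"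
  using partition unfolding lueroth_partition_def tail_def by simp

lemma tail_nonneg: "1 \<le> n \<Longrightarrow> 0 \<le> tail a n"
  unfolding tail_def by (rule suminf_nonneg[OF summable_shifted]) (simp add: a_pos less_imp_le)

lemma tail_pos: "1 \<le> n \<Longrightarrow> 0 < tail a n"
  using tail_Suc[of n] tail_nonneg[of "Suc n"] a_pos[of n] by simp

lemma tail_antimono:
  assumes "1 \<le> m" "m \<le> n"
  shows "tail a n \<le> tail a m"
  using assms(2)
proof (induction n rule: dec_induct)
  case (step n)
  then show ?case using tail_Suc[of n] a_pos[of n] assms(1) by simp
qed simp

lemma tail_strict_antimono: "1 \<le> m \<Longrightarrow> m < n \<Longrightarrow> tail a n < tail a m"
  using tail_antimono[of "Suc m" n] tail_Suc[of m] a_pos[of m] by simp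

lemma tail_le_1: "1 \<le> n \<Longrightarrow> tail a n \<le> 1"
  using tail_antimono[of 1 n] tail_1 by simp

lemma a_less_1: "1 \<le> n \<Longrightarrow> a n < 1"
  using tail_Suc[of n] tail_pos[of "Suc n"] tail_le_1[of n] by simp

lemma a_le_tail: "1 \<le> n \<Longrightarrow> a n \<le> tail a n"
  using tail_Suc[of n] tail_nonneg[of "Suc n"] by simp

lemma lue_digit_eqI:
  assumes "1 \<le> n" "tail a (Suc n) < x" "x \<le> tail a n"
  shows "lue_digit a x = n"
  unfolding lue_digit_def
proof (rule the_equality)
  fix m assume m: "1 \<le> m \<and> tail a (Suc m) < x \<and> x \<le> tail a m"
  show "m = n"
  proof (rule ccontr)
    assume "m \<noteq> n"
    then have "tail a n \<le> tail a (Suc m) \<or> tail a m \<le> tail a (Suc n)"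
      using tail_antimono[of "Suc m" n] tail_antimono[of "Suc n" m] by linarith
    with m assms show False by linarith
  qed
qed (use assms in simp)

lemma lue_digit_exists:
  assumes "0 < x" "x \<le> 1"
  shows "\<exists>n. 1 \<le> n \<and> tail a (Suc n) < x \<and> x \<le> tail a n"
proof -
  obtain N where N: "\<forall>n\<ge>N. \<bar>\<Sum>k. a (k + n)\<bar> < x"
    using suminf_exist_split[OF assms(1) summable_shifted[of 0]] by auto
  have "tail a (Suc N) < x"
    using N[rule_format, of "Suc N"] unfolding tail_def by linarith
  define n where "n = (LEAST m. tail a (Suc m) < x)"
  have n: "tail a (Suc n) < x" unfolding n_def by (rule LeastI) fact
  have "n \<noteq> 0"
  proof
    assume "n = 0"
    with n tail_1 assms show False by simp
  qed
  then obtain m where m: "n = Suc m" using not0_implies_Suc by blast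
  have "\<not> tail a (Suc m) < x" using not_less_Least[of m "\<lambda>m. tail a (Suc m) < x"] m n_def by simp
  with n m show ?thesis by (intro exI[of _ n]) auto
qed

lemma lue_digit:
  assumes "0 < x" "x \<le> 1"
  shows "1 \<le> lue_digit a x" "tail a (Suc (lue_digit a x)) < x" "x \<le> tail a (lue_digit a x)"
  using lue_digit_exists[OF assms] lue_digit_eqI by metis+

lemma lue_map_bounds:
  assumes "0 < x" "x \<le> 1"
  shows "0 \<le> lue_map a x" "lue_map a x < 1"
  using lue_digit[OF assms] tail_Suc[of "lue_digit a x"] a_pos[of "lue_digit a x"] assms
  by (auto simp: lue_map_def field_simps)

lemma tail_minus_lue_map:
  assumes "0 < x" "x \<le> 1"
  shows "tail a (lue_digit a x) - a (lue_digit a x) * lue_map a x = x"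
  using lue_digit[OF assms] a_pos[of "lue_digit a x"] assms
  by (auto simp: lue_map_def)

lemma lue_map_range: "0 \<le> x \<Longrightarrow> x \<le> 1 \<Longrightarrow> 0 \<le> lue_map a x \<and> lue_map a x \<le> 1"
  using lue_map_bounds[of x] by (cases "x = 0") (auto simp: lue_map_def)

lemma funpow_lue_map_range:
  "0 \<le> x \<Longrightarrow> x \<le> 1 \<Longrightarrow> 0 \<le> (lue_map a ^^ k) x \<and> (lue_map a ^^ k) x \<le> 1"
  by (induction k) (auto simp: lue_map_range)

lemma funpow_lue_map_0: "(lue_map a ^^ k) 0 = 0"
  by (induction k) (auto simp: lue_map_def)

lemma lue_digit_tail: "1 \<le> n \<Longrightarrow> lue_digit a (tail a n) = n"
  by (rule lue_digit_eqI) (auto intro: tail_strict_antimono)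

lemma lue_digit_antimono:
  assumes "0 < x" "x \<le> y" "y \<le> 1"
  shows "lue_digit a y \<le> lue_digit a x"
proof (rule ccontr)
  assume "\<not> ?thesis"
  then have "tail a (lue_digit a y) \<le> tail a (Suc (lue_digit a x))"
    using tail_antimono[of "Suc (lue_digit a x)" "lue_digit a y"] by simp
  then show False using lue_digit[of x] lue_digit[of y] assms by linarith
qed

lemma abs_theta_term_le:
  assumes "0 \<le> x" "x \<le> 1"
  shows "\<bar>theta_term a x k\<bar> \<le> (1/2) ^ Suc k"
proof (cases "(lue_map a ^^ k) x = 0")
  case False
  have "1 \<le> lue_digit a ((lue_map a ^^ i) x)" if "i \<le> k" for i
  proof -
    have "(lue_map a ^^ k) x = (lue_map a ^^ (k - i)) ((lue_map a ^^ i) x)"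
      using that by (metis funpow_add le_add_diff_inverse2 o_apply)
    then have "(lue_map a ^^ i) x \<noteq> 0" using False funpow_lue_map_0 by auto
    then show ?thesis using lue_digit(1) funpow_lue_map_range[OF assms, of i] by force
  qed
  then have "(\<Sum>i\<le>k. 1) \<le> (\<Sum>i\<le>k. lue_digit a ((lue_map a ^^ i) x))"
    by (intro sum_mono) auto
  then have "(1/2::real) ^ (\<Sum>i\<le>k. lue_digit a ((lue_map a ^^ i) x)) \<le> (1/2) ^ Suc k"
    by (intro power_decreasing) auto
  then show ?thesis
    using False by (simp add: theta_term_def abs_mult power_abs)
qed (simp add: theta_term_def)

lemma summable_abs_theta_term: "0 \<le> x \<Longrightarrow> x \<le> 1 \<Longrightarrow> summable (\<lambda>k. \<bar>theta_term a x k\<bar>)"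
  using abs_theta_term_le
  by (intro summable_rabs_comparison_test[of _ "\<lambda>k. (1/2) ^ Suc k"]) (auto simp: summable_geometric)

lemma abs_theta_le_2:
  assumes "0 \<le> x" "x \<le> 1"
  shows "\<bar>theta a x\<bar> \<le> 2"
proof -
  have "\<bar>\<Sum>k. theta_term a x k\<bar> \<le> (\<Sum>k. \<bar>theta_term a x k\<bar>)"
    by (rule summable_rabs[OF summable_abs_theta_term[OF assms]])
  also have "\<dots> \<le> (\<Sum>k. (1/2) ^ Suc k)"
    using abs_theta_term_le[OF assms] summable_abs_theta_term[OF assms]
    by (intro suminf_le) (auto simp: summable_geometric)
  also have "\<dots> = 1"
    using suminf_mult[of "\<lambda>k. (1/2::real) ^ k" "1/2"] suminf_geometric[of "1/2::real"]
    by (simp add: summable_geometric)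
  finally show ?thesis by (simp add: theta_eq_suminf abs_mult)
qed

lemma theta_0: "theta a 0 = 0"
  unfolding theta_def by (simp add: funpow_lue_map_0)

lemma theta_rec:
  assumes "0 < x" "x \<le> 1"
  shows "theta a x = (1/2) ^ lue_digit a x * (2 - theta a (lue_map a x))"
proof -
  define n u where "n = lue_digit a x" and "u = lue_map a x"
  have u: "0 \<le> u" "u \<le> 1" using lue_map_bounds[OF assms] u_def by auto
  have shift: "theta_term a x (Suc k) = - ((1/2) ^ n) * theta_term a u k" for k
  proof -
    have "(lue_map a ^^ Suc k) x = (lue_map a ^^ k) u"
      by (simp only: funpow_Suc_right o_apply u_def)
    moreover have "(\<Sum>i\<le>Suc k. lue_digit a ((lue_map a ^^ i) x)) =
        n + (\<Sum>i\<le>k. lue_digit a ((lue_map a ^^ i) u))"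
      by (subst sum.atMost_Suc_shift)
        (simp add: funpow_Suc_right u_def n_def funpow_swap1 del: funpow.simps)
    ultimately show ?thesis by (simp add: theta_term_def power_add)
  qed
  have head: "theta_term a x 0 = - ((1/2) ^ n)"
    using assms by (simp add: theta_term_def n_def)
  have "(\<Sum>k. theta_term a x k) = theta_term a x 0 + (\<Sum>k. theta_term a x (Suc k))"
    using suminf_split_head[OF summable_rabs_cancel[OF summable_abs_theta_term]] assms by simp
  also have "\<dots> = - ((1/2) ^ n) + - ((1/2) ^ n) * (\<Sum>k. theta_term a u k)"
    unfolding shift head
    by (simp only: suminf_mult[OF summable_rabs_cancel[OF summable_abs_theta_term[OF u]]])
  finally show ?thesis unfolding theta_eq_suminf n_def[symmetric] u_def[symmetric]
    by (simp add: algebra_simps)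
qed

lemma theta_range:
  assumes "0 \<le> x" "x \<le> 1"
  shows "0 \<le> theta a x" "theta a x \<le> 1"
proof -
  let ?P = "\<lambda>x::real. 0 \<le> x \<and> x \<le> 1"
  let ?F = "\<lambda>x. max (- theta a x) (theta a x - 1)"
  have "?F x \<le> 0"
  proof (rule le_by_contraction[where P = ?P and F = ?F and G = "\<lambda>_. 0" and B = 3])
    fix x :: real assume x: "?P x"
    show "?F x \<le> 0 + 3" using abs_theta_le_2[of x] x by auto
    show "?F x \<le> 0 \<or> (\<exists>u h. ?P u \<and> 0 \<le> h \<and> h \<le> 1/2 \<and> ?F x \<le> h * ?F u \<and> h * 0 \<le> 0)"
    proof (cases "x = 0")
      case False
      define h u where "h = (1/2::real) ^ lue_digit a x" and "u = lue_map a x"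
      have x0: "0 < x" using x False by simp
      have h: "0 \<le> h" "h \<le> 1/2"
        using half_power_le_half[OF lue_digit(1)[OF x0]] x h_def by auto
      have "theta a x = h * (2 - theta a u)" using theta_rec[OF x0] x h_def u_def by simp
      then have "- theta a x \<le> h * (theta a u - 1)" "theta a x - 1 \<le> h * (- theta a u)"
        using h by (auto simp: algebra_simps)
      then have "?F x \<le> h * ?F u" using h by (auto simp: max_mult_distrib_left)
      moreover have "?P u" using lue_map_range[of x] x u_def by simp
      ultimately show ?thesis using h by (intro disjI2 exI[of _ u] exI[of _ h]) simp
    qed (simp add: theta_0)
  qed (use assms in auto)
  then show "0 \<le> theta a x" "theta a x \<le> 1" by auto
qed

lemma theta_tail: "1 \<le> n \<Longrightarrow> theta a (tail a n) = 2 * (1/2) ^ n"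
  using theta_rec[of "tail a n"] tail_pos tail_le_1 lue_digit_tail[of n]
  by (simp add: lue_map_def theta_0)

lemma theta_same_digit:
  assumes "0 < x" "x < y" "y \<le> 1" "lue_digit a x = n" "lue_digit a y = n"
  shows "lue_map a y < lue_map a x"
    and "y - x = a n * (lue_map a x - lue_map a y)"
    and "theta a y - theta a x = (1/2) ^ n * (theta a (lue_map a x) - theta a (lue_map a y))"
proof -
  show diff: "y - x = a n * (lue_map a x - lue_map a y)"
    using tail_minus_lue_map[of x] tail_minus_lue_map[of y] assms by (auto simp: algebra_simps)
  have "0 < a n" using a_pos lue_digit(1)[of x] assms by auto
  moreover have "0 < a n * (lue_map a x - lue_map a y)" using diff \<open>x < y\<close> by linarith
  ultimately show "lue_map a y < lue_map a x" by (simp add: zero_less_mult_iff)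
  show "theta a y - theta a x = (1/2) ^ n * (theta a (lue_map a x) - theta a (lue_map a y))"
    using theta_rec[of x] theta_rec[of y] assms by (auto simp: algebra_simps)
qed

lemma theta_adjacent_digits:
  assumes "0 < x" "x < y" "y \<le> 1" "lue_digit a y = m" "lue_digit a x = Suc m"
  shows "x \<le> tail a (Suc m)" and "tail a (Suc m) < y"
    and "y - tail a (Suc m) = a m * (1 - lue_map a y)"
    and "tail a (Suc m) - x = a (Suc m) * lue_map a x"
    and "theta a y - theta a (tail a (Suc m)) = (1/2) ^ m * (1 - theta a (lue_map a y))"
    and "theta a (tail a (Suc m)) - theta a x = (1/2) ^ Suc m * theta a (lue_map a x)"
    and "theta a x \<le> theta a (tail a (Suc m))" and "theta a (tail a (Suc m)) \<le> theta a y"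
proof -
  have y: "0 < y" using assms by simp
  show "x \<le> tail a (Suc m)" "tail a (Suc m) < y"
    using lue_digit[OF assms(1)] lue_digit[OF y assms(3)] assms by auto
  show "y - tail a (Suc m) = a m * (1 - lue_map a y)"
    using tail_minus_lue_map[OF y assms(3)] tail_Suc[of m] assms by (auto simp: algebra_simps)
  show "tail a (Suc m) - x = a (Suc m) * lue_map a x"
    using tail_minus_lue_map[of x] assms by (auto simp: algebra_simps)
  have "1 \<le> m" using lue_digit(1)[OF y assms(3)] assms by simp
  then have "theta a (tail a (Suc m)) = (1/2) ^ m" using theta_tail[of "Suc m"] by simp
  then show yb: "theta a y - theta a (tail a (Suc m)) = (1/2) ^ m * (1 - theta a (lue_map a y))"
    and bx: "theta a (tail a (Suc m)) - theta a x = (1/2) ^ Suc m * theta a (lue_map a x)"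
    using theta_rec[of x] theta_rec[of y] assms by (auto simp: algebra_simps)
  have "0 \<le> (1/2) ^ m * (1 - theta a (lue_map a y))" "0 \<le> (1/2) ^ Suc m * theta a (lue_map a x)"
    using theta_range lue_map_bounds[of x] lue_map_bounds[of y] assms by auto
  then show "theta a x \<le> theta a (tail a (Suc m))" "theta a (tail a (Suc m)) \<le> theta a y"
    using yb bx by linarith+
qed

lemma theta_far_digits:
  assumes "0 < x" "x < y" "y \<le> 1" "lue_digit a y = m" "Suc (Suc m) \<le> lue_digit a x"
  shows "a (Suc m) \<le> y - x" and "y - x \<le> tail a m"
    and "(1/2) ^ m / 2 \<le> theta a y - theta a x" and "theta a y - theta a x \<le> 2 * (1/2) ^ m"
proof -
  have y: "0 < y" using assms by simp
  have "x \<le> tail a (Suc (Suc m))"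
    using lue_digit[OF assms(1)] tail_antimono[of "Suc (Suc m)" "lue_digit a x"] assms by auto
  then show "a (Suc m) \<le> y - x" "y - x \<le> tail a m"
    using lue_digit[OF y assms(3)] tail_Suc[of "Suc m"] assms by auto
  have "(1/2::real) ^ lue_digit a x \<le> (1/2) ^ Suc (Suc m)"
    using assms by (intro power_decreasing) auto
  moreover have "0 \<le> theta a x"
    using theta_range assms by simp
  moreover have "theta a x \<le> 2 * (1/2) ^ lue_digit a x"
    using theta_rec[of x] theta_range[of "lue_map a x"] lue_map_bounds[of x] assms by simp
  moreover have "(1/2) ^ m \<le> theta a y" "theta a y \<le> 2 * (1/2) ^ m"
    using theta_rec[OF y assms(3)] theta_range[of "lue_map a y"] lue_map_bounds[OF y assms(3)] assms
    by auto
  ultimately show "(1/2) ^ m / 2 \<le> theta a y - theta a x" "theta a y - theta a x \<le> 2 * (1/2) ^ m"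
    by auto
qed

context
  fixes \<kappa> :: real
  assumes kappa_nonneg: "0 \<le> \<kappa>"
    and half_power_le_powr: "\<And>n. 1 \<le> n \<Longrightarrow> (1/2) ^ n \<le> a n powr \<kappa>"
begin

lemma half_power_le_powr_of_le: "1 \<le> n \<Longrightarrow> a n \<le> d \<Longrightarrow> (1/2) ^ n \<le> d powr \<kappa>"
  using half_power_le_powr[of n] powr_mono2[OF kappa_nonneg less_imp_le[OF a_pos]] by force

lemma theta_le_powr:
  assumes "0 \<le> v" "v \<le> 1"
  shows "theta a v \<le> 4 * v powr \<kappa>"
proof (cases "v = 0")
  case False
  then have v: "0 < v" using assms by simp
  define j where "j = lue_digit a v"
  have "theta a v \<le> 2 * (1/2) ^ j"
    using theta_rec[OF v assms(2)] theta_range[of "lue_map a v"] lue_map_bounds[OF v assms(2)] j_def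
    by simp
  moreover have "(1/2) ^ Suc j \<le> v powr \<kappa>"
    using half_power_le_powr_of_le[of "Suc j" v] a_le_tail[of "Suc j"] lue_digit[OF v assms(2)] j_def
    by simp
  ultimately show ?thesis by simp
qed (simp add: theta_0)

lemma one_minus_theta_le_powr:
  assumes "0 \<le> u" "u < 1"
  shows "1 - theta a u \<le> 4 * (1 - u) powr \<kappa>"
proof (cases "tail a 2 < u")
  case True
  then have u: "0 < u" using tail_nonneg[of 2] by simp
  have digit: "lue_digit a u = 1"
    by (rule lue_digit_eqI) (use True assms tail_1 in \<open>auto simp: numeral_2_eq_2\<close>)
  define w where "w = lue_map a u"
  have w: "0 \<le> w" "w < 1" using lue_map_bounds[of u] u assms w_def by auto
  have "1 - u = a 1 * w" using tail_minus_lue_map[of u] u assms digit tail_1 w_def by simp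
  then have "(1 - u) powr \<kappa> = a 1 powr \<kappa> * w powr \<kappa>" using a_pos[of 1] w by (simp add: powr_mult)
  moreover have "1 - theta a u = theta a w / 2" using theta_rec[of u] u assms digit w_def by simp
  moreover have "theta a w \<le> 4 * w powr \<kappa>" using theta_le_powr w by simp
  moreover have "1/2 * w powr \<kappa> \<le> a 1 powr \<kappa> * w powr \<kappa>"
    using half_power_le_powr[of 1] by (intro mult_right_mono) auto
  ultimately show ?thesis by simp
next
  case False
  then have "a 1 \<le> 1 - u" using tail_Suc[of 1] tail_1 by (simp add: numeral_2_eq_2)
  then have "1/2 \<le> (1 - u) powr \<kappa>" using half_power_le_powr_of_le[of 1] by simp
  with theta_range[of u] assms show ?thesis by simp
qed

lemma theta_diff_le_powr_of_digit_less:
  assumes "0 < x" "x < y" "y \<le> 1" "lue_digit a y < lue_digit a x"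
  shows "\<bar>theta a y - theta a x\<bar> \<le> 8 * (y - x) powr \<kappa>"
proof -
  define m where "m = lue_digit a y"
  have m: "1 \<le> m" using lue_digit(1)[of y] assms m_def by simp
  consider (adjacent) "lue_digit a x = Suc m" | (far) "Suc (Suc m) \<le> lue_digit a x"
    using assms m_def by linarith
  then show ?thesis
  proof cases
    case adjacent
    define b where "b = tail a (Suc m)"
    note adj = theta_adjacent_digits[OF assms(1-3) m_def[symmetric] adjacent, folded b_def]
    have Lx: "0 \<le> lue_map a x" "lue_map a x < 1" and Ly: "0 \<le> lue_map a y" "lue_map a y < 1"
      using lue_map_bounds[of x] lue_map_bounds[of y] assms by auto
    have "(1/2) ^ m * (1 - theta a (lue_map a y)) \<le> a m powr \<kappa> * (4 * (1 - lue_map a y) powr \<kappa>)"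
      using half_power_le_powr[OF m] one_minus_theta_le_powr[OF Ly] theta_range[of "lue_map a y"] Ly
      by (intro mult_mono) auto
    then have yb: "theta a y - theta a b \<le> 4 * (y - b) powr \<kappa>"
      using adj(3,5) a_pos[OF m] Ly by (simp add: powr_mult)
    have "(1/2) ^ Suc m * theta a (lue_map a x) \<le> a (Suc m) powr \<kappa> * (4 * lue_map a x powr \<kappa>)"
      using half_power_le_powr[of "Suc m"] theta_le_powr[of "lue_map a x"] theta_range[of "lue_map a x"] Lx
      by (intro mult_mono) auto
    then have bx: "theta a b - theta a x \<le> 4 * (b - x) powr \<kappa>"
      using adj(4,6) a_pos[of "Suc m"] Lx by (simp add: powr_mult)
    have "(y - b) powr \<kappa> \<le> (y - x) powr \<kappa>" "(b - x) powr \<kappa> \<le> (y - x) powr \<kappa>"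
      using adj(1,2) assms kappa_nonneg by (auto intro: powr_mono2)
    then show ?thesis using yb bx adj(7,8) by linarith
  next
    case far
    note far_digits = theta_far_digits[OF assms(1-3) m_def[symmetric] far]
    have "(1/2) ^ Suc m \<le> (y - x) powr \<kappa>"
      using half_power_le_powr_of_le[OF _ far_digits(1)] by simp
    then show ?thesis using far_digits(3,4) by (simp add: abs_le_iff)
  qed
qed

lemma theta_holder_step:
  assumes "0 \<le> x" "x < y" "y \<le> 1"
  shows "\<bar>theta a y - theta a x\<bar> \<le> 8 * (y - x) powr \<kappa> \<or>
    (\<exists>u v h. 0 \<le> u \<and> u < v \<and> v \<le> 1 \<and> 0 \<le> h \<and> h \<le> 1/2 \<and>
      \<bar>theta a y - theta a x\<bar> \<le> h * \<bar>theta a v - theta a u\<bar> \<and>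
      h * (8 * (v - u) powr \<kappa>) \<le> 8 * (y - x) powr \<kappa>)"
proof (cases "x = 0")
  case True
  then show ?thesis using theta_le_powr[of y] theta_range[of y] theta_0 assms by auto
next
  case False
  then have x: "0 < x" using assms by simp
  have "lue_digit a y \<le> lue_digit a x" using lue_digit_antimono x assms by simp
  then consider (same) "lue_digit a x = lue_digit a y" | (less) "lue_digit a y < lue_digit a x"
    by linarith
  then show ?thesis
  proof cases
    case same
    define n h where "n = lue_digit a x" and "h = (1/2::real) ^ n"
    define u v where "u = lue_map a y" and "v = lue_map a x"
    note S = theta_same_digit[OF x assms(2,3) n_def[symmetric], folded u_def v_def h_def]
    have n: "1 \<le> n" using lue_digit(1)[OF x] assms n_def by simp
    have uv: "0 \<le> u" "u < v" "v \<le> 1"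
      using S(1) lue_map_bounds[of x] lue_map_bounds[of y] x assms u_def v_def same n_def by auto
    have h: "0 \<le> h" "h \<le> 1/2" using half_power_le_half[OF n] h_def by auto
    have "\<bar>theta a y - theta a x\<bar> = h * \<bar>theta a v - theta a u\<bar>"
      using S(3) same n_def h by (simp add: abs_mult)
    moreover have "h * (8 * (v - u) powr \<kappa>) \<le> a n powr \<kappa> * (8 * (v - u) powr \<kappa>)"
      using half_power_le_powr[OF n] h_def by (intro mult_right_mono) auto
    moreover have "a n powr \<kappa> * (v - u) powr \<kappa> = (y - x) powr \<kappa>"
      using S(2) same n_def a_pos[OF n] uv by (simp add: powr_mult)
    ultimately show ?thesis using uv h by (intro disjI2 exI[of _ u] exI[of _ v] exI[of _ h]) auto
  next
    case less
    then show ?thesis using theta_diff_le_powr_of_digit_less x assms by blast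
  qed
qed

lemma theta_diff_le_powr:
  assumes "0 \<le> x" "x < y" "y \<le> 1"
  shows "\<bar>theta a y - theta a x\<bar> \<le> 8 * (y - x) powr \<kappa>"
proof -
  let ?P = "\<lambda>p::real \<times> real. 0 \<le> fst p \<and> fst p < snd p \<and> snd p \<le> 1"
  let ?F = "\<lambda>p. \<bar>theta a (snd p) - theta a (fst p)\<bar>"
  let ?G = "\<lambda>p. 8 * (snd p - fst p) powr \<kappa>"
  have "?F (x, y) \<le> ?G (x, y)"
  proof (rule le_by_contraction[where P = ?P and B = 1])
    fix p assume "?P p"
    then obtain x y where p: "p = (x, y)" and xy: "0 \<le> x" "x < y" "y \<le> 1" by (cases p) auto
    show "?F p \<le> ?G p + 1"
      using theta_range[of x] theta_range[of y] xy p by (auto intro!: add_increasing)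
    from theta_holder_step[OF xy]
    show "?F p \<le> ?G p \<or> (\<exists>q h. ?P q \<and> 0 \<le> h \<and> h \<le> 1/2 \<and> ?F p \<le> h * ?F q \<and> h * ?G q \<le> ?G p)"
    proof
      assume "\<exists>u v h. 0 \<le> u \<and> u < v \<and> v \<le> 1 \<and> 0 \<le> h \<and> h \<le> 1/2 \<and>
        \<bar>theta a y - theta a x\<bar> \<le> h * \<bar>theta a v - theta a u\<bar> \<and>
        h * (8 * (v - u) powr \<kappa>) \<le> 8 * (y - x) powr \<kappa>"
      then obtain u v h where "?P (u, v)" "0 \<le> h" "h \<le> 1/2"
        "?F p \<le> h * ?F (u, v)" "h * ?G (u, v) \<le> ?G p" using p by auto
      then show ?thesis by blast
    qed (use p in simp)
  qed (use assms in auto)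
  then show ?thesis by simp
qed

lemma holder_cont_theta: "holder_cont (theta a) \<kappa>"
  by (rule holder_contI[OF theta_diff_le_powr]) auto

end

context
  fixes \<kappa> :: real
  assumes kappa_pos: "0 < \<kappa>"
    and powr_le_half_power: "\<And>n. 1 \<le> n \<Longrightarrow> a n powr \<kappa> \<le> (1/2) ^ n"
begin

text \<open>With \<open>r = 2 powr (-1/\<kappa>)\<close> the hypothesis says \<open>a\<^sub>j \<le> r\<^sup>j\<close>, so the tails are dominated by
  a geometric series.\<close>

lemma tail_powr_le: "\<exists>K\<ge>1. \<forall>m\<ge>1. tail a m powr \<kappa> \<le> K * (1/2) ^ m"
proof -
  define r where "r = (1/2::real) powr (1/\<kappa>)"
  have "(1/\<kappa>) * ln (1/2::real) < 0" using kappa_pos by (intro mult_pos_neg) auto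
  then have r: "0 < r" "r < 1" unfolding r_def by (auto simp: powr_def)
  have a_le: "a j \<le> r ^ j" if j: "1 \<le> j" for j
  proof -
    have "a j = (a j powr \<kappa>) powr (1/\<kappa>)" using kappa_pos a_pos[OF j] by (simp add: powr_powr)
    also have "\<dots> \<le> ((1/2) ^ j) powr (1/\<kappa>)"
      using powr_le_half_power[OF j] kappa_pos by (intro powr_mono2) auto
    also have "\<dots> = r ^ j" unfolding r_def by (simp add: powr_powr powr_realpow[symmetric] mult.commute)
    finally show ?thesis .
  qed
  define K where "K = (1 / (1 - r)) powr \<kappa>"
  have "tail a m powr \<kappa> \<le> K * (1/2) ^ m" if m: "1 \<le> m" for m
  proof -
    have geometric: "summable (\<lambda>k. r ^ (k + m))"
      using r by (simp add: power_add summable_geometric summable_mult2)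
    have "tail a m \<le> (\<Sum>k. r ^ (k + m))" unfolding tail_def
      by (rule suminf_le[OF _ summable_shifted geometric]) (use a_le m in auto)
    also have "\<dots> = r ^ m * (1 / (1 - r))"
      using suminf_mult2[of "\<lambda>k. r ^ k" "r ^ m"] suminf_geometric[of r] r
      by (simp add: power_add summable_geometric)
    finally have "tail a m powr \<kappa> \<le> (r ^ m * (1 / (1 - r))) powr \<kappa>"
      using tail_nonneg[OF m] kappa_pos by (intro powr_mono2) auto
    also have "\<dots> = (r ^ m) powr \<kappa> * K" unfolding K_def using r by (subst powr_mult) auto
    also have "(r ^ m) powr \<kappa> = (r powr \<kappa>) ^ m"
      using r by (simp add: powr_realpow[symmetric] powr_powr powr_power mult.commute)
    also have "r powr \<kappa> = 1/2" unfolding r_def using kappa_pos by (simp add: powr_powr)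
    finally show ?thesis by (simp add: mult.commute)
  qed
  moreover have "1 \<le> K" unfolding K_def using r kappa_pos by (intro ge_one_powr_ge_zero) auto
  ultimately show ?thesis by blast
qed

context
  fixes K :: real
  assumes K_ge_1: "1 \<le> K"
    and tail_powr_le_K: "\<And>m. 1 \<le> m \<Longrightarrow> tail a m powr \<kappa> \<le> K * (1/2) ^ m"
begin

lemma powr_le_theta:
  assumes "0 \<le> v" "v \<le> 1"
  shows "v powr \<kappa> \<le> K * theta a v"
proof (cases "v = 0")
  case False
  then have v: "0 < v" using assms by simp
  define j where "j = lue_digit a v"
  have "v powr \<kappa> \<le> tail a j powr \<kappa>"
    using lue_digit[OF v assms(2)] v kappa_pos j_def by (intro powr_mono2) auto
  also have "\<dots> \<le> K * (1/2) ^ j"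
    using tail_powr_le_K lue_digit(1)[OF v assms(2)] j_def by simp
  also have "\<dots> \<le> K * theta a v"
    using theta_rec[OF v assms(2)] theta_range[of "lue_map a v"] lue_map_bounds[OF v assms(2)] j_def K_ge_1
    by (intro mult_left_mono) auto
  finally show ?thesis .
qed (simp add: theta_0)

lemma powr_le_one_minus_theta:
  assumes "0 \<le> u" "u < 1"
  shows "(1 - u) powr \<kappa> \<le> 2 * K * (1 - theta a u)"
proof (cases "tail a 2 < u")
  case True
  then have u: "0 < u" using tail_nonneg[of 2] by simp
  have digit: "lue_digit a u = 1"
    by (rule lue_digit_eqI) (use True assms tail_1 in \<open>auto simp: numeral_2_eq_2\<close>)
  define w where "w = lue_map a u"
  have w: "0 \<le> w" "w < 1" using lue_map_bounds[of u] u assms w_def by auto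
  have "1 - u = a 1 * w" using tail_minus_lue_map[of u] u assms digit tail_1 w_def by simp
  then have "1 - u \<le> w" using mult_right_mono[of "a 1" 1 w] a_less_1[of 1] w by simp
  then have "(1 - u) powr \<kappa> \<le> w powr \<kappa>" using assms kappa_pos by (intro powr_mono2) auto
  also have "\<dots> \<le> K * theta a w" using powr_le_theta w by simp
  also have "theta a w = 2 * (1 - theta a u)" using theta_rec[of u] u assms digit w_def by simp
  finally show ?thesis by (simp add: algebra_simps)
next
  case False
  have "theta a u \<le> 1/2"
  proof (cases "u = 0")
    case nonzero: False
    then have u: "0 < u" using assms by simp
    have "lue_digit a u \<noteq> 1"
      using lue_digit(2)[OF u] assms False by (auto simp: numeral_2_eq_2)
    then have "2 \<le> lue_digit a u" using lue_digit(1)[OF u] assms by simp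
    then have "(1/2::real) ^ lue_digit a u \<le> (1/2) ^ 2" by (intro power_decreasing) auto
    then have "(1/2::real) ^ lue_digit a u \<le> 1/4" by (simp add: power2_eq_square)
    moreover have "0 \<le> theta a (lue_map a u)" "theta a (lue_map a u) \<le> 1"
      using theta_range lue_map_bounds[OF u] assms by auto
    ultimately have "(1/2) ^ lue_digit a u * (2 - theta a (lue_map a u)) \<le> 1/4 * 2"
      by (intro mult_mono) auto
    then show ?thesis using theta_rec[OF u] assms by simp
  qed (simp add: theta_0)
  then have "1 \<le> 2 * (1 - theta a u)" by simp
  also have "\<dots> \<le> 2 * K * (1 - theta a u)"
    using K_ge_1 \<open>theta a u \<le> 1/2\<close> by (intro mult_right_mono) auto
  finally show ?thesis
    using powr_le1[of \<kappa> "1 - u"] assms kappa_pos by simp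
qed

lemma theta_diff_ge_powr_of_digit_less:
  assumes "0 < x" "x < y" "y \<le> 1" "lue_digit a y < lue_digit a x"
  shows "((y - x) / 2) powr \<kappa> \<le> 2 * K * \<bar>theta a y - theta a x\<bar>"
proof -
  define m where "m = lue_digit a y"
  have m: "1 \<le> m" using lue_digit(1)[of y] assms m_def by simp
  consider (adjacent) "lue_digit a x = Suc m" | (far) "Suc (Suc m) \<le> lue_digit a x"
    using assms m_def by linarith
  then show ?thesis
  proof cases
    case adjacent
    define b where "b = tail a (Suc m)"
    note adj = theta_adjacent_digits[OF assms(1-3) m_def[symmetric] adjacent, folded b_def]
    have Lx: "0 \<le> lue_map a x" "lue_map a x < 1" and Ly: "0 \<le> lue_map a y" "lue_map a y < 1"
      using lue_map_bounds[of x] lue_map_bounds[of y] assms by auto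
    have "(y - b) powr \<kappa> = a m powr \<kappa> * (1 - lue_map a y) powr \<kappa>"
      using adj(3) a_pos[OF m] Ly by (simp add: powr_mult)
    also have "\<dots> \<le> (1/2) ^ m * (2 * K * (1 - theta a (lue_map a y)))"
      using powr_le_half_power[OF m] powr_le_one_minus_theta[OF Ly] by (intro mult_mono) auto
    also have "\<dots> = 2 * K * (theta a y - theta a b)" using adj(5) by simp
    finally have yb: "(y - b) powr \<kappa> \<le> 2 * K * (theta a y - theta a b)" .
    have "(b - x) powr \<kappa> = a (Suc m) powr \<kappa> * lue_map a x powr \<kappa>"
      using adj(4) a_pos[of "Suc m"] Lx by (simp add: powr_mult)
    also have "\<dots> \<le> (1/2) ^ Suc m * (K * theta a (lue_map a x))"
      using powr_le_half_power[of "Suc m"] powr_le_theta[of "lue_map a x"] Lx by (intro mult_mono) auto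
    also have "\<dots> = K * (theta a b - theta a x)" using adj(6) by simp
    also have "\<dots> \<le> 2 * K * (theta a b - theta a x)"
      using K_ge_1 adj(7) by (intro mult_right_mono) auto
    finally have bx: "(b - x) powr \<kappa> \<le> 2 * K * (theta a b - theta a x)" .
    have "((y - x) / 2) powr \<kappa> \<le> (y - b) powr \<kappa> + (b - x) powr \<kappa>"
      using powr_half_le_powr_add[OF less_imp_le[OF kappa_pos] adj(1)] adj(2) by simp
    also have "\<dots> \<le> 2 * K * (theta a y - theta a x)" using yb bx by (simp add: algebra_simps)
    also have "\<dots> \<le> 2 * K * \<bar>theta a y - theta a x\<bar>" using K_ge_1 by (intro mult_left_mono) auto
    finally show ?thesis .
  next
    case far
    note far_digits = theta_far_digits[OF assms(1-3) m_def[symmetric] far]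
    have "((y - x) / 2) powr \<kappa> \<le> tail a m powr \<kappa>"
      using far_digits(2) assms kappa_pos by (intro powr_mono2) auto
    also have "\<dots> \<le> 2 * K * ((1/2) ^ m / 2)" using tail_powr_le_K[OF m] by simp
    also have "\<dots> \<le> 2 * K * \<bar>theta a y - theta a x\<bar>"
      using far_digits(3) K_ge_1 by (intro mult_left_mono) linarith+
    finally show ?thesis .
  qed
qed

lemma theta_sub_holder_step:
  assumes "0 \<le> x" "x < y" "y \<le> 1"
  shows "((y - x) / 2) powr \<kappa> \<le> 2 * K * \<bar>theta a y - theta a x\<bar> \<or>
    (\<exists>u v h. 0 \<le> u \<and> u < v \<and> v \<le> 1 \<and> 0 \<le> h \<and> h \<le> 1/2 \<and>
      ((y - x) / 2) powr \<kappa> \<le> h * ((v - u) / 2) powr \<kappa> \<and>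
      h * (2 * K * \<bar>theta a v - theta a u\<bar>) \<le> 2 * K * \<bar>theta a y - theta a x\<bar>)"
proof (cases "x = 0")
  case True
  have "(y / 2) powr \<kappa> \<le> y powr \<kappa>" using assms kappa_pos by (intro powr_mono2) auto
  also have "\<dots> \<le> K * theta a y" using powr_le_theta assms by simp
  also have "\<dots> \<le> 2 * K * theta a y" using K_ge_1 theta_range[of y] assms by simp
  finally show ?thesis using True theta_range[of y] theta_0 assms by simp
next
  case False
  then have x: "0 < x" using assms by simp
  have "lue_digit a y \<le> lue_digit a x" using lue_digit_antimono x assms by simp
  then consider (same) "lue_digit a x = lue_digit a y" | (less) "lue_digit a y < lue_digit a x"
    by linarith
  then show ?thesis
  proof cases
    case same
    define n h where "n = lue_digit a x" and "h = (1/2::real) ^ n"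
    define u v where "u = lue_map a y" and "v = lue_map a x"
    note S = theta_same_digit[OF x assms(2,3) n_def[symmetric], folded u_def v_def h_def]
    have n: "1 \<le> n" using lue_digit(1)[OF x] assms n_def by simp
    have uv: "0 \<le> u" "u < v" "v \<le> 1"
      using S(1) lue_map_bounds[of x] lue_map_bounds[of y] x assms u_def v_def same n_def by auto
    have h: "0 \<le> h" "h \<le> 1/2" using half_power_le_half[OF n] h_def by auto
    have "((y - x) / 2) powr \<kappa> = (a n * ((v - u) / 2)) powr \<kappa>"
      using S(2) same n_def by simp
    also have "\<dots> = a n powr \<kappa> * ((v - u) / 2) powr \<kappa>"
      using a_pos[OF n] uv by (subst powr_mult) auto
    also have "\<dots> \<le> h * ((v - u) / 2) powr \<kappa>"
      using powr_le_half_power[OF n] h_def by (intro mult_right_mono) auto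
    finally have F: "((y - x) / 2) powr \<kappa> \<le> h * ((v - u) / 2) powr \<kappa>" .
    have G: "\<bar>theta a y - theta a x\<bar> = h * \<bar>theta a v - theta a u\<bar>"
      using S(3) same n_def h by (simp add: abs_mult)
    show ?thesis
      by (intro disjI2 exI[of _ u] exI[of _ v] exI[of _ h] conjI) (use uv h F G in simp_all)
  next
    case less
    then show ?thesis using theta_diff_ge_powr_of_digit_less x assms by blast
  qed
qed

lemma theta_diff_ge_powr:
  assumes "0 \<le> x" "x < y" "y \<le> 1"
  shows "((y - x) / 2) powr \<kappa> \<le> 2 * K * \<bar>theta a y - theta a x\<bar>"
proof -
  let ?P = "\<lambda>p::real \<times> real. 0 \<le> fst p \<and> fst p < snd p \<and> snd p \<le> 1"
  let ?F = "\<lambda>p. ((snd p - fst p) / 2) powr \<kappa>"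
  let ?G = "\<lambda>p. 2 * K * \<bar>theta a (snd p) - theta a (fst p)\<bar>"
  have "?F (x, y) \<le> ?G (x, y)"
  proof (rule le_by_contraction[where P = ?P and B = 1])
    fix p assume "?P p"
    then obtain x y where p: "p = (x, y)" and xy: "0 \<le> x" "x < y" "y \<le> 1" by (cases p) auto
    have "?F p \<le> 1" using xy p kappa_pos by (auto intro: powr_le1)
    then show "?F p \<le> ?G p + 1" using K_ge_1 by (simp add: add_increasing)
    from theta_sub_holder_step[OF xy]
    show "?F p \<le> ?G p \<or> (\<exists>q h. ?P q \<and> 0 \<le> h \<and> h \<le> 1/2 \<and> ?F p \<le> h * ?F q \<and> h * ?G q \<le> ?G p)"
    proof
      assume "\<exists>u v h. 0 \<le> u \<and> u < v \<and> v \<le> 1 \<and> 0 \<le> h \<and> h \<le> 1/2 \<and>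
        ((y - x) / 2) powr \<kappa> \<le> h * ((v - u) / 2) powr \<kappa> \<and>
        h * (2 * K * \<bar>theta a v - theta a u\<bar>) \<le> 2 * K * \<bar>theta a y - theta a x\<bar>"
      then obtain u v h where "?P (u, v)" "0 \<le> h" "h \<le> 1/2"
        "?F p \<le> h * ?F (u, v)" "h * ?G (u, v) \<le> ?G p" using p by auto
      then show ?thesis by blast
    qed (use p in simp)
  qed (use assms in auto)
  then show ?thesis by simp
qed

end

lemma sub_holder_cont_theta: "sub_holder_cont (theta a) \<kappa>"
proof -
  obtain K where K: "1 \<le> K" "\<And>m. 1 \<le> m \<Longrightarrow> tail a m powr \<kappa> \<le> K * (1/2) ^ m"
    using tail_powr_le by blast
  have "(1/2) powr \<kappa> / (2 * K) * (y - x) powr \<kappa> \<le> \<bar>theta a y - theta a x\<bar>"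
    if "0 \<le> x" "x < y" "y \<le> 1" for x y
  proof -
    have "((y - x) / 2) powr \<kappa> = (1/2) powr \<kappa> * (y - x) powr \<kappa>"
      using that by (simp add: powr_mult[symmetric])
    then show ?thesis
      using theta_diff_ge_powr[OF K that] K(1) by (simp add: field_simps)
  qed
  then show ?thesis by (rule sub_holder_contI) (use K(1) in \<open>auto intro: divide_pos_pos\<close>)
qed

end

end

theorem lemma2p3:
  fixes a :: "nat \<Rightarrow> real"
  assumes "lueroth_partition a"
  shows "holder_cont (theta a) (Inf (kappa a ` {n. 1 \<le> n})) \<and>
         (bdd_above (kappa a ` {n. 1 \<le> n}) \<longrightarrow>
           sub_holder_cont (theta a) (Sup (kappa a ` {n. 1 \<le> n})))"
proof -
  interpret lueroth a by (rule lueroth.intro[OF assms])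
  define S where "S = kappa a ` {n. 1 \<le> n}"
  have a: "0 < a n" "a n < 1" if "1 \<le> n" for n using a_pos a_less_1 that by auto
  have kappa_pos: "0 < kappa a n" if "1 \<le> n" for n
    using a[OF that] that by (simp add: kappa_def divide_pos_neg)
  have "S \<noteq> {}" "bdd_below S"
    unfolding S_def using kappa_pos by (auto intro!: bdd_belowI[of _ 0] less_imp_le)
  have "0 \<le> Inf S"
    using \<open>S \<noteq> {}\<close> kappa_pos by (intro cInf_greatest) (auto simp: S_def less_imp_le)
  moreover have "Inf S \<le> kappa a n" if "1 \<le> n" for n
    using \<open>bdd_below S\<close> that by (auto simp: S_def intro!: cInf_lower)
  ultimately have "holder_cont (theta a) (Inf S)"
    using a by (intro holder_cont_theta) (auto simp: half_power_le_powr_iff kappa_def)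
  moreover have "sub_holder_cont (theta a) (Sup S)" if "bdd_above S"
  proof -
    have le_Sup: "kappa a n \<le> Sup S" if "1 \<le> n" for n
      using cSup_upper[OF _ \<open>bdd_above S\<close>] that by (auto simp: S_def)
    then have "0 < Sup S" using kappa_pos[of 1] by fastforce
    with le_Sup show ?thesis
      using a by (intro sub_holder_cont_theta) (auto simp: powr_le_half_power_iff kappa_def)
  qed
  ultimately show ?thesis unfolding S_def by blast
qed

end
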